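(* Let $\ell_1,\dots,\ell_n:\mathbb{R}^d\to\mathbb{R}$ be twice continuously differentiable, let $T\subseteq[n]$, and suppose $L_T\defeq\sum_{i\notin T}\ell_i$ is convex on $\mathbb{R}^d$. Let $\hat{\theta}$ be a point with $\sum_{i=1}^n\nabla\ell_i(\hat\theta)=0$, and let $\hat\theta_T$ be any point with $\nabla L_T(\hat\theta_T)=0$. Write $g_\theta=\nabla L_T(\theta)$, $H_\theta=\nabla^2L_T(\theta)$, $g=g_{\hat\theta}$, $H=H_{\hat\theta}$, assume $H$ is invertible, and set $\hat\theta_T^{\mathrm{NS}}\defeq\hat\theta-H^{-1}g$. Let $\Sigma$ be a positive-definite $d\times d$ matrix, $r>0$, and $\mathcal{B}\defeq\{\hat\theta_T^{\mathrm{NS}}+e:\ \|e\|_\Sigma\le r\}$. Assume: (i) (strong convexity in $\mathcal B$) $H_\theta$ is invertible and $\|\Sigma^{1/2}H_\theta^{-1}\Sigma^{1/2}\|_{\mathrm{op}}\le C_{\mathrm{op}}$ for all $\theta\in\mathcal{B}$; (ii) (mildly Lipschitz Hessian) $\|(H_\theta-H)H^{-1}g\|_{\Sigma^{-1}}\le C_h$ for all $\theta=t\hat\theta+(1-t)\hat\theta_T^{\mathrm{NS}}$, $t\in[0,1]$; (iii) $C_hC_{\mathrm{op}}<r$. Then $\|\hat\theta_T-\hat\theta_T^{\mathrm{NS}}\|_\Sigma\le C_hC_{\mathrm{op}}$.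
   Context: For a positive-definite matrix $M$, $\|v\|_M\defeq\sqrt{v^\top Mv}$. $\|\cdot\|_{\mathrm{op}}$ is the spectral (operator) norm. $\hat\theta_T^{\mathrm{NS}}$ is the "single Newton step" estimate of the model retrained without the samples in $T$. *)

theory Defs
  imports "HOL-Analysis.Analysis"
begin

definition grad :: "(real^'d \<Rightarrow> real) \<Rightarrow> real^'d \<Rightarrow> real^'d" where
  "grad f x = (\<chi> j. frechet_derivative f (at x) (axis j 1))"

definition hess :: "(real^'d \<Rightarrow> real) \<Rightarrow> real^'d \<Rightarrow> real^'d^'d" where
  "hess f x = (\<chi> i j. frechet_derivative (\<lambda>y. grad f y $ i) (at x) (axis j 1))"

definition C2 :: "(real^'d \<Rightarrow> real) \<Rightarrow> bool" where
  "C2 f \<longleftrightarrow> (\<forall>x. f differentiable (at x)) \<and> (\<forall>x. grad f differentiable (at x))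
     \<and> continuous_on UNIV (hess f)"

definition pos_def :: "real^'d^'d \<Rightarrow> bool" where
  "pos_def M \<longleftrightarrow> transpose M = M \<and> (\<forall>v. v \<noteq> 0 \<longrightarrow> v \<bullet> (M *v v) > 0)"

definition mnorm :: "real^'d^'d \<Rightarrow> real^'d \<Rightarrow> real" where
  "mnorm M v = sqrt (v \<bullet> (M *v v))"

definition msqrt :: "real^'d^'d \<Rightarrow> real^'d^'d" where
  "msqrt M = (THE S. pos_def S \<and> S ** S = M)"

definition opnorm :: "real^'d^'d \<Rightarrow> real" where
  "opnorm A = onorm (\<lambda>x. A *v x)"

end

(*
  Put u = thetaT - thetaNS and phi(s) = grad L (thetaNS + s u) . u, so that phi(1) = 0.
  The mean value theorem on the segment from thetaNS to thetahat, together with (ii), bounds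
  the gradient at the Newton step in the dual norm: |phi(0)| <= C_h ||u||_Sigma.
  Hypothesis (i) says Sigma <= C_op H_theta in the Loewner order on the ball B, so
  phi' >= ||u||_Sigma^2 / C_op as long as thetaNS + s u stays in B.  If ||u||_Sigma > C_h C_op,
  then, as C_h C_op < r, phi becomes positive before the segment leaves B, and by monotonicity
  of the gradient of the convex function L it stays positive up to s = 1: a contradiction.
  Turning (i) into the Loewner bound needs that msqrt Sigma really is the square root of Sigma
  (spectral theorem) and that Hessians are symmetric (Schwarz's theorem).
*)
theory Submission
  imports Defs
begin

section \<open>Symmetric and positive-definite matrices\<close>

lemma symmetric_matrix_inner:
  fixes M :: "real^'n^'n"
  assumes "transpose M = M"
  shows "(M *v x) \<bullet> y = x \<bullet> (M *v y)"
  by (metis assms dot_lmul_matrix transpose_matrix_vector)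

lemma symmetric_matrixI:
  fixes M :: "real^'n^'n"
  assumes "\<And>x y. (M *v x) \<bullet> y = x \<bullet> (M *v y)"
  shows "transpose M = M"
proof -
  have "transpose M *v x = M *v x" for x
  proof -
    have "(x v* M - M *v x) \<bullet> y = 0" for y
      using assms[of x y] dot_lmul_matrix[of x M y] by (simp add: inner_diff_left)
    from this[of "x v* M - M *v x"] show ?thesis by simp
  qed
  then show ?thesis by (simp add: matrix_eq)
qed

lemma matrix_vector_mul_matrix_inv:
  fixes A :: "'a::semiring_1^'n^'m"
  assumes "invertible A"
  shows "A *v (matrix_inv A *v x) = x"
proof -
  from assms obtain A' where "A ** A' = mat 1 \<and> A' ** A = mat 1"
    unfolding invertible_def by blast
  then have "A ** matrix_inv A = mat 1 \<and> matrix_inv A ** A = mat 1"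
    unfolding matrix_inv_def by (rule someI)
  then show ?thesis by (simp add: matrix_vector_mul_assoc)
qed

lemma pos_def_form_nonneg: "pos_def S \<Longrightarrow> v \<bullet> (S *v v) \<ge> 0"
  unfolding pos_def_def by (cases "v = 0") (auto intro: less_imp_le)

lemma pos_def_invertible:
  fixes S :: "real^'n^'n"
  assumes "pos_def S"
  shows "invertible S"
proof -
  have "inj ((*v) S)"
  proof (rule injI)
    fix x y assume "S *v x = S *v y"
    then have "(x - y) \<bullet> (S *v (x - y)) = 0" by (simp add: matrix_vector_mult_diff_distrib)
    then show "x = y" using assms unfolding pos_def_def by (metis less_irrefl right_minus_eq)
  qed
  then show ?thesis
    by (metis matrix_left_invertible_injective invertible_left_inverse)
qed

lemma pos_def_matrix_inv_form_nonneg: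
  fixes S :: "real^'n^'n"
  assumes "pos_def S"
  shows "v \<bullet> (matrix_inv S *v v) \<ge> 0"
proof -
  define w where "w = matrix_inv S *v v"
  have "S *v w = v"
    unfolding w_def by (rule matrix_vector_mul_matrix_inv[OF pos_def_invertible[OF assms]])
  then have "v \<bullet> w = w \<bullet> (S *v w)" by (simp add: inner_commute)
  then show ?thesis using pos_def_form_nonneg[OF assms, of w] unfolding w_def by simp
qed

lemma psd_form_Cauchy_Schwarz:
  fixes A :: "real^'n^'n"
  assumes sym: "transpose A = A" and psd: "\<And>v. v \<bullet> (A *v v) \<ge> 0"
  shows "(x \<bullet> (A *v y))\<^sup>2 \<le> (x \<bullet> (A *v x)) * (y \<bullet> (A *v y))"
proof -
  let ?a = "x \<bullet> (A *v x)" and ?b = "x \<bullet> (A *v y)" and ?c = "y \<bullet> (A *v y)"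
  have yx: "y \<bullet> (A *v x) = ?b"
    using symmetric_matrix_inner[OF sym, of y x] by (simp add: inner_commute)
  have quadratic: "?a + 2 * t * ?b + t\<^sup>2 * ?c \<ge> 0" for t
  proof -
    have "(x + t *\<^sub>R y) \<bullet> (A *v (x + t *\<^sub>R y)) = ?a + 2 * t * ?b + t\<^sup>2 * ?c"
      using yx by (simp add: power2_eq_square algebra_simps)
    then show ?thesis using psd[of "x + t *\<^sub>R y"] by simp
  qed
  show ?thesis
  proof (cases "?c = 0")
    case True
    have "?b = 0"
    proof (rule ccontr)
      assume "?b \<noteq> 0"
      with True quadratic[of "- (?a + 1) / (2 * ?b)"] show False by (simp add: field_simps)
    qed
    then show ?thesis using True by simp
  next
    case False
    then have "?c > 0" using psd[of y] by simp
    with quadratic[of "- ?b / ?c"] show ?thesis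
      by (simp add: field_simps power2_eq_square)
  qed
qed

lemma mnorm_scaleR: "mnorm S (c *\<^sub>R u) = \<bar>c\<bar> * mnorm S u"
proof -
  have "(c *\<^sub>R u) \<bullet> (S *v (c *\<^sub>R u)) = c\<^sup>2 * (u \<bullet> (S *v u))"
    by (simp add: matrix_vector_mult_scaleR power2_eq_square)
  then show ?thesis unfolding mnorm_def by (simp add: real_sqrt_mult)
qed

lemma abs_inner_le_mnorm_dual:
  fixes \<Sigma> :: "real^'n^'n"
  assumes pd: "pos_def \<Sigma>"
  shows "\<bar>a \<bullet> u\<bar> \<le> mnorm (matrix_inv \<Sigma>) a * mnorm \<Sigma> u"
proof -
  have sym: "transpose \<Sigma> = \<Sigma>" using pd unfolding pos_def_def by simp
  define w where "w = matrix_inv \<Sigma> *v a"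
  have \<Sigma>w: "\<Sigma> *v w = a"
    unfolding w_def by (rule matrix_vector_mul_matrix_inv[OF pos_def_invertible[OF pd]])
  have "a \<bullet> u = w \<bullet> (\<Sigma> *v u)" using symmetric_matrix_inner[OF sym, of w u] \<Sigma>w by simp
  then have "(a \<bullet> u)\<^sup>2 \<le> (w \<bullet> (\<Sigma> *v w)) * (u \<bullet> (\<Sigma> *v u))"
    using psd_form_Cauchy_Schwarz[OF sym pos_def_form_nonneg[OF pd], of w u] by simp
  also have "w \<bullet> (\<Sigma> *v w) = a \<bullet> (matrix_inv \<Sigma> *v a)" using \<Sigma>w w_def by (simp add: inner_commute)
  finally have "sqrt ((a \<bullet> u)\<^sup>2) \<le> sqrt (a \<bullet> (matrix_inv \<Sigma> *v a) * (u \<bullet> (\<Sigma> *v u)))"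
    by (rule real_sqrt_le_mono)
  then show ?thesis unfolding mnorm_def by (simp add: real_sqrt_mult)
qed

section \<open>The spectral theorem and the matrix square root\<close>

definition orthonormal_upto :: "(nat \<Rightarrow> 'a::real_inner) \<Rightarrow> nat \<Rightarrow> bool" where
  "orthonormal_upto e k \<longleftrightarrow> (\<forall>i<k. \<forall>j<k. e i \<bullet> e j = (if i = j then 1 else 0))"

lemma orthonormal_upto_inner_sum:
  assumes "orthonormal_upto e k" "j < k"
  shows "e j \<bullet> (\<Sum>i<k. c i *\<^sub>R e i) = c j"
proof -
  have "e j \<bullet> (\<Sum>i<k. c i *\<^sub>R e i) = (\<Sum>i<k. c i * (e j \<bullet> e i))"
    by (simp add: inner_sum_right)
  also have "\<dots> = (\<Sum>i<k. if i = j then c j else 0)"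
    using assms unfolding orthonormal_upto_def by (intro sum.cong) auto
  finally show ?thesis using assms(2) by simp
qed

lemma orthonormal_upto_nonzero: "orthonormal_upto e k \<Longrightarrow> i < k \<Longrightarrow> e i \<noteq> 0"
  unfolding orthonormal_upto_def by force

lemma orthonormal_upto_expansion:
  fixes e :: "nat \<Rightarrow> real^'n"
  assumes on: "orthonormal_upto e CARD('n)"
  shows "v = (\<Sum>i<CARD('n). (e i \<bullet> v) *\<^sub>R e i)"
proof (rule ccontr)
  let ?n = "CARD('n)"
  define p where "p = v - (\<Sum>i<?n. (e i \<bullet> v) *\<^sub>R e i)"
  assume "v \<noteq> (\<Sum>i<?n. (e i \<bullet> v) *\<^sub>R e i)"
  then have p0: "p \<noteq> 0" unfolding p_def by simp
  have pe: "e j \<bullet> p = 0" if "j < ?n" for j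
    using orthonormal_upto_inner_sum[OF on that] unfolding p_def by (simp add: inner_diff_right)
  have einj: "inj_on e {..<?n}"
    using on unfolding orthonormal_upto_def by (intro inj_onI) (metis lessThan_iff zero_neq_one)
  have pnot: "p \<notin> e ` {..<?n}"
    using pe p0 on unfolding orthonormal_upto_def by force
  define S where "S = insert p (e ` {..<?n})"
  have "pairwise orthogonal S"
    using on pe unfolding S_def pairwise_def orthogonal_def orthonormal_upto_def
    by (auto simp: inner_commute)
  moreover have "0 \<notin> S" unfolding S_def using p0 orthonormal_upto_nonzero[OF on] by force
  ultimately have "card S \<le> DIM(real^'n)"
    using pairwise_orthogonal_independent independent_bound by blast
  moreover have "card S = Suc ?n" unfolding S_def using pnot card_image[OF einj] by simp
  ultimately show False by simp
qed

lemma matrix_vector_mul_orthonormal_expansion: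
  fixes e :: "nat \<Rightarrow> real^'n"
  assumes "orthonormal_upto e CARD('n)"
  shows "A *v v = (\<Sum>i<CARD('n). (e i \<bullet> v) *\<^sub>R (A *v e i))"
proof -
  have "A *v v = A *v (\<Sum>i<CARD('n). (e i \<bullet> v) *\<^sub>R e i)"
    by (rule arg_cong[OF orthonormal_upto_expansion[OF assms]])
  then show ?thesis by (simp add: vec.sum matrix_vector_mult_scaleR)
qed

lemma linear_coeff_zero_if_quadratic_nonpos:
  fixes c K :: real
  assumes "\<And>t. 2 * t * c + t\<^sup>2 * K \<le> 0"
  shows "c = 0"
proof (rule ccontr)
  assume "c \<noteq> 0"
  define t where "t = c / (\<bar>K\<bar> + 1)"
  have "t\<^sup>2 * \<bar>K\<bar> = c\<^sup>2 * \<bar>K\<bar> / (\<bar>K\<bar> + 1)\<^sup>2" unfolding t_def by (simp add: power_divide)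
  also have "\<dots> < c\<^sup>2 * (\<bar>K\<bar> + 1) / (\<bar>K\<bar> + 1)\<^sup>2"
    using \<open>c \<noteq> 0\<close> by (intro divide_strict_right_mono mult_strict_left_mono) auto
  also have "\<dots> = t * c" unfolding t_def by (simp add: power2_eq_square)
  finally have "t\<^sup>2 * \<bar>K\<bar> < t * c" .
  moreover have "- (t\<^sup>2 * \<bar>K\<bar>) \<le> t\<^sup>2 * K"
    using mult_left_mono[of "- \<bar>K\<bar>" K "t\<^sup>2"] by simp
  moreover have "0 < t * c" using \<open>c \<noteq> 0\<close> unfolding t_def by (simp add: power2_eq_square[symmetric])
  ultimately show False using assms[of t] by linarith
qed

lemma Rayleigh_quotient_maximizer:
  fixes M :: "real^'n^'n"
  assumes V: "subspace V" and x: "x \<in> V" "x \<noteq> 0"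
  obtains w where "w \<in> V" "norm w = 1"
    "\<And>y. y \<in> V \<Longrightarrow> y \<bullet> (M *v y) \<le> (w \<bullet> (M *v w)) * (y \<bullet> y)"
proof -
  let ?K = "V \<inter> sphere 0 1"
  have "compact ?K"
    using closed_subspace[OF V] compact_sphere by (rule closed_Int_compact)
  moreover have "(1 / norm x) *\<^sub>R x \<in> ?K" using x V by (simp add: subspace_scale)
  then have "?K \<noteq> {}" by blast
  moreover have "continuous_on ?K (\<lambda>v. v \<bullet> (M *v v))"
    by (intro continuous_intros linear_continuous_on matrix_vector_mul_bounded_linear)
  ultimately obtain w where w: "w \<in> ?K" and wmax: "\<And>y. y \<in> ?K \<Longrightarrow> y \<bullet> (M *v y) \<le> w \<bullet> (M *v w)"
    using continuous_attains_sup[of ?K "\<lambda>v. v \<bullet> (M *v v)"] by blast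
  have "y \<bullet> (M *v y) \<le> (w \<bullet> (M *v w)) * (y \<bullet> y)" if "y \<in> V" for y
  proof (cases "y = 0")
    case False
    then have "(1 / norm y) *\<^sub>R y \<in> ?K" using that V by (simp add: subspace_scale)
    from wmax[OF this] have "(y \<bullet> (M *v y)) / (norm y)\<^sup>2 \<le> w \<bullet> (M *v w)"
      by (simp add: matrix_vector_mult_scaleR power2_eq_square)
    then show ?thesis using False by (simp add: divide_le_eq dot_square_norm mult.commute)
  qed simp
  with w that show ?thesis by auto
qed

lemma Rayleigh_maximizer_eigenvector:
  fixes M :: "real^'n^'n"
  assumes sym: "transpose M = M" and V: "subspace V"
    and invariant: "\<And>v. v \<in> V \<Longrightarrow> M *v v \<in> V"
    and w: "w \<in> V" "norm w = 1"
    and max: "\<And>y. y \<in> V \<Longrightarrow> y \<bullet> (M *v y) \<le> (w \<bullet> (M *v w)) * (y \<bullet> y)"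
  shows "M *v w = (w \<bullet> (M *v w)) *\<^sub>R w"
proof -
  define \<mu> where "\<mu> = w \<bullet> (M *v w)"
  have ww: "w \<bullet> w = 1" using w by (simp add: dot_square_norm)
  have orth: "z \<bullet> (M *v w) = 0" if z: "z \<in> V" "z \<bullet> w = 0" for z
  proof (rule linear_coeff_zero_if_quadratic_nonpos)
    fix t
    have "w + t *\<^sub>R z \<in> V" using w z V by (simp add: subspace_add subspace_scale)
    from max[OF this] have
      "\<mu> + 2 * t * (z \<bullet> (M *v w)) + t\<^sup>2 * (z \<bullet> (M *v z)) \<le> \<mu> * (1 + t\<^sup>2 * (z \<bullet> z))"
      using ww z symmetric_matrix_inner[OF sym, of w z]
      by (simp add: \<mu>_def power2_eq_square algebra_simps inner_commute)
    then show "2 * t * (z \<bullet> (M *v w)) + t\<^sup>2 * (z \<bullet> (M *v z) - \<mu> * (z \<bullet> z)) \<le> 0"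
      by (simp add: algebra_simps)
  qed
  define z where "z = M *v w - \<mu> *\<^sub>R w"
  have "z \<in> V" unfolding z_def using invariant w V by (simp add: subspace_diff subspace_scale)
  moreover have zw: "z \<bullet> w = 0"
    unfolding z_def \<mu>_def using ww by (simp add: inner_diff_left inner_commute[of "M *v w" w])
  ultimately have "z \<bullet> z = 0" unfolding z_def using orth by (simp add: inner_diff_right)
  then show ?thesis unfolding z_def \<mu>_def by simp
qed

lemma symmetric_matrix_orthonormal_eigenvectors:
  fixes M :: "real^'n^'n"
  assumes sym: "transpose M = M"
  shows "k \<le> CARD('n) \<Longrightarrow> \<exists>e \<mu>. orthonormal_upto e k \<and> (\<forall>i<k. M *v e i = \<mu> i *\<^sub>R e i)"
proof (induction k)
  case 0
  show ?case by (simp add: orthonormal_upto_def)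
next
  case (Suc k)
  then obtain e \<mu> where on: "orthonormal_upto e k" and ev: "\<forall>i<k. M *v e i = \<mu> i *\<^sub>R e i"
    by fastforce
  define V where "V = {v. \<forall>i<k. e i \<bullet> v = 0}"
  have V: "subspace V" unfolding V_def subspace_def by (simp add: inner_add_right)
  have "dim (e ` {..<k}) \<le> k"
    using dim_le_card'[of "e ` {..<k}"] card_image_le[of "{..<k}" e] by simp
  also have "k < DIM(real^'n)" using Suc.prems by simp
  finally obtain x where x: "x \<noteq> 0" "\<And>y. y \<in> span (e ` {..<k}) \<Longrightarrow> orthogonal x y"
    using orthogonal_to_subspace_exists by blast
  have "x \<in> V" unfolding V_def
  proof safe
    fix i assume "i < k"
    then have "e i \<in> span (e ` {..<k})" by (simp add: span_base)
    then show "e i \<bullet> x = 0" using x(2) by (metis orthogonal_def inner_commute)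
  qed
  then obtain w where w: "w \<in> V" "norm w = 1"
    and max: "\<And>y. y \<in> V \<Longrightarrow> y \<bullet> (M *v y) \<le> (w \<bullet> (M *v w)) * (y \<bullet> y)"
    using Rayleigh_quotient_maximizer[OF V _ x(1)] by blast
  have "M *v v \<in> V" if "v \<in> V" for v
    using that ev unfolding V_def by (auto simp: symmetric_matrix_inner[OF sym, symmetric])
  from Rayleigh_maximizer_eigenvector[OF sym V this w max]
  have "\<forall>i<Suc k. M *v (e(k := w)) i = (\<mu>(k := w \<bullet> (M *v w))) i *\<^sub>R (e(k := w)) i"
    using ev by (auto simp: less_Suc_eq)
  moreover have "orthonormal_upto (e(k := w)) (Suc k)"
    using on w unfolding orthonormal_upto_def V_def
    by (auto simp: less_Suc_eq inner_commute dot_square_norm)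
  ultimately show ?case by blast
qed

lemma symmetric_matrix_spectral:
  fixes M :: "real^'n^'n"
  assumes "transpose M = M"
  obtains e \<mu> where "orthonormal_upto e CARD('n)" "\<And>i. i < CARD('n) \<Longrightarrow> M *v e i = \<mu> i *\<^sub>R e i"
  using symmetric_matrix_orthonormal_eigenvectors[OF assms order_refl] by blast

lemma orthonormal_weighted_matrix:
  fixes e :: "nat \<Rightarrow> real^'n"
  assumes on: "orthonormal_upto e CARD('n)" and c: "\<And>i. i < CARD('n) \<Longrightarrow> c i > 0"
  defines "S \<equiv> matrix (\<lambda>v. \<Sum>i<CARD('n). (c i * (e i \<bullet> v)) *\<^sub>R e i)"
  shows "S *v v = (\<Sum>i<CARD('n). (c i * (e i \<bullet> v)) *\<^sub>R e i)" and "pos_def S"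
proof -
  let ?n = "CARD('n)"
  have "linear (\<lambda>v. \<Sum>i<?n. (c i * (e i \<bullet> v)) *\<^sub>R e i)"
    by (rule linearI) (simp_all add: inner_add_right distrib_left scaleR_add_left sum.distrib
        scaleR_sum_right mult.left_commute)
  then show Sv: "S *v v = (\<Sum>i<?n. (c i * (e i \<bullet> v)) *\<^sub>R e i)" for v
    unfolding S_def by (simp add: matrix_works)
  have form: "(S *v x) \<bullet> y = (\<Sum>i<?n. c i * (e i \<bullet> x) * (e i \<bullet> y))" for x y
    by (simp add: Sv inner_sum_left mult.assoc)
  have "transpose S = S"
    by (rule symmetric_matrixI) (simp add: form inner_commute[of x "S *v y" for x y] mult_ac)
  moreover have "v \<bullet> (S *v v) > 0" if "v \<noteq> 0" for v
  proof -
    have "\<exists>j<?n. e j \<bullet> v \<noteq> 0"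
    proof (rule ccontr)
      assume "\<not> ?thesis"
      then have "(\<Sum>i<?n. (e i \<bullet> v) *\<^sub>R e i) = 0" by simp
      then show False using that orthonormal_upto_expansion[OF on, of v] by simp
    qed
    then obtain j where j: "j < ?n" "e j \<bullet> v \<noteq> 0" by blast
    have "v \<bullet> (S *v v) = (\<Sum>i<?n. c i * (e i \<bullet> v) * (e i \<bullet> v))"
      using form[of v v] by (simp add: inner_commute)
    also have "\<dots> > 0"
    proof (rule sum_pos2[of _ j])
      show "0 < c j * (e j \<bullet> v) * (e j \<bullet> v)"
        using j(2) c[OF j(1)] by (metis mult.assoc mult_pos_pos not_real_square_gt_zero)
    qed (use j c in \<open>auto simp: mult.assoc less_imp_le\<close>)
    finally show ?thesis .
  qed
  ultimately show "pos_def S" unfolding pos_def_def by blast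
qed

lemma pos_def_sqrt_exists:
  fixes \<Sigma> :: "real^'n^'n"
  assumes pd: "pos_def \<Sigma>"
  shows "\<exists>S. pos_def S \<and> S ** S = \<Sigma>"
proof -
  let ?n = "CARD('n)"
  obtain e \<mu> where on: "orthonormal_upto e ?n" and ev: "\<And>i. i < ?n \<Longrightarrow> \<Sigma> *v e i = \<mu> i *\<^sub>R e i"
    using symmetric_matrix_spectral pd unfolding pos_def_def by metis
  have \<mu>: "\<mu> i > 0" if "i < ?n" for i
    using pd orthonormal_upto_nonzero[OF on that] ev[OF that] on that
    unfolding pos_def_def orthonormal_upto_def by fastforce
  define S where "S = matrix (\<lambda>v. \<Sum>i<?n. (sqrt (\<mu> i) * (e i \<bullet> v)) *\<^sub>R e i)"
  note S = orthonormal_weighted_matrix[OF on, of "\<lambda>i. sqrt (\<mu> i)", folded S_def]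
  have "(S ** S) *v v = \<Sigma> *v v" for v
  proof -
    have "(S ** S) *v v = (\<Sum>i<?n. (sqrt (\<mu> i) * (e i \<bullet> (S *v v))) *\<^sub>R e i)"
      using \<mu> by (simp add: S(1) flip: matrix_vector_mul_assoc)
    also have "\<dots> = (\<Sum>i<?n. (e i \<bullet> v) *\<^sub>R (\<Sigma> *v e i))"
      using \<mu> ev by (intro sum.cong) (simp_all add: S(1) orthonormal_upto_inner_sum[OF on]
          mult.assoc[symmetric] less_imp_le)
    also have "\<dots> = \<Sigma> *v v"
      by (rule matrix_vector_mul_orthonormal_expansion[OF on, symmetric])
    finally show ?thesis .
  qed
  then have "S ** S = \<Sigma>" by (simp add: matrix_eq)
  then show ?thesis using S(2) \<mu> by auto
qed

lemma pos_def_sqrt_unique: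
  fixes S R :: "real^'n^'n"
  assumes S: "pos_def S" and R: "pos_def R" and eq: "S ** S = R ** R"
  shows "S = R"
proof -
  let ?n = "CARD('n)"
  define D where "D = S - R"
  have sS: "transpose S = S" and sR: "transpose R = R" using S R unfolding pos_def_def by auto
  have Dv: "D *v v = S *v v - R *v v" for v
    unfolding D_def by (simp add: matrix_vector_mult_diff_rdistrib)
  have sD: "transpose D = D"
    by (rule symmetric_matrixI) (simp add: Dv inner_diff_left inner_diff_right
        symmetric_matrix_inner[OF sS] symmetric_matrix_inner[OF sR])
  obtain e \<mu> where on: "orthonormal_upto e ?n" and ev: "\<And>i. i < ?n \<Longrightarrow> D *v e i = \<mu> i *\<^sub>R e i"
    using symmetric_matrix_spectral[OF sD] by metis
  have "\<mu> i = 0" if i: "i < ?n" for i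
  proof -
    let ?e = "e i"
    \<comment> \<open>\<open>S\<^sup>2 - R\<^sup>2 = S D + D R\<close>, and the eigenvalue of \<open>D\<close> at \<open>?e\<close> factors out of its form.\<close>
    have "S *v (S *v ?e) = R *v (R *v ?e)" using eq by (simp add: matrix_vector_mul_assoc)
    then have "0 = S *v (D *v ?e) + D *v (R *v ?e)"
      by (simp add: Dv matrix_vector_mult_diff_distrib)
    then have "0 = ?e \<bullet> (S *v (D *v ?e)) + (D *v ?e) \<bullet> (R *v ?e)"
      by (metis inner_add_right inner_zero_right symmetric_matrix_inner[OF sD])
    then have "0 = \<mu> i * (?e \<bullet> (S *v ?e) + ?e \<bullet> (R *v ?e))"
      using ev[OF i] by (simp add: algebra_simps)
    moreover have "?e \<bullet> (S *v ?e) + ?e \<bullet> (R *v ?e) > 0"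
      using S R orthonormal_upto_nonzero[OF on i] unfolding pos_def_def by (simp add: add_pos_pos)
    ultimately show ?thesis by simp
  qed
  then have "D *v v = 0" for v
    using matrix_vector_mul_orthonormal_expansion[OF on, of D v] ev by simp
  then show ?thesis by (simp add: matrix_eq Dv)
qed

lemma pos_def_msqrt:
  fixes \<Sigma> :: "real^'n^'n"
  assumes "pos_def \<Sigma>"
  shows "pos_def (msqrt \<Sigma>)" and "msqrt \<Sigma> ** msqrt \<Sigma> = \<Sigma>"
proof -
  have "\<exists>!S. pos_def S \<and> S ** S = \<Sigma>"
    using pos_def_sqrt_exists[OF assms] pos_def_sqrt_unique by metis
  then have "pos_def (msqrt \<Sigma>) \<and> msqrt \<Sigma> ** msqrt \<Sigma> = \<Sigma>"
    unfolding msqrt_def by (rule theI')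
  then show "pos_def (msqrt \<Sigma>)" and "msqrt \<Sigma> ** msqrt \<Sigma> = \<Sigma>" by auto
qed

lemma opnorm_nonneg: "opnorm A \<ge> 0"
  unfolding opnorm_def by (rule onorm_pos_le[OF matrix_vector_mul_bounded_linear])

text \<open>With \<open>z = A\<^sup>-\<^sup>1 \<Sigma> u\<close>, Cauchy--Schwarz for the form of \<open>A\<close> bounds \<open>(u\<bullet>\<Sigma>u)\<^sup>2 = (u\<bullet>Az)\<^sup>2\<close>
  by \<open>(u\<bullet>Au)(z\<bullet>Az)\<close>, and \<open>z\<bullet>Az\<close> is the form of \<open>\<Sigma>\<^sup>1\<^sup>/\<^sup>2 A\<^sup>-\<^sup>1 \<Sigma>\<^sup>1\<^sup>/\<^sup>2\<close> at \<open>\<Sigma>\<^sup>1\<^sup>/\<^sup>2 u\<close>.\<close>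
lemma quadratic_form_le_of_opnorm_inverse:
  fixes A \<Sigma> :: "real^'n^'n"
  assumes pd: "pos_def \<Sigma>" and sA: "transpose A = A" and psd: "\<And>v. v \<bullet> (A *v v) \<ge> 0"
    and invA: "invertible A"
    and op: "opnorm (msqrt \<Sigma> ** matrix_inv A ** msqrt \<Sigma>) \<le> C"
  shows "u \<bullet> (\<Sigma> *v u) \<le> C * (u \<bullet> (A *v u))"
proof -
  define S where "S = msqrt \<Sigma>"
  have sS: "transpose S = S" and SS: "S ** S = \<Sigma>"
    using pos_def_msqrt[OF pd] unfolding S_def pos_def_def by auto
  define B where "B = S ** matrix_inv A ** S"
  have nB: "norm (B *v x) \<le> C * norm x" for x
  proof -
    have "norm (B *v x) \<le> onorm (\<lambda>x. B *v x) * norm x"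
      by (rule onorm) (rule matrix_vector_mul_bounded_linear)
    also have "\<dots> \<le> C * norm x" using op unfolding opnorm_def B_def S_def
      by (intro mult_right_mono) auto
    finally show ?thesis .
  qed
  have C0: "C \<ge> 0" using op opnorm_nonneg order_trans by blast
  have \<Sigma>v: "\<Sigma> *v v = S *v (S *v v)" for v using SS by (simp add: matrix_vector_mul_assoc)
  define z where "z = matrix_inv A *v (\<Sigma> *v u)"
  have Az: "A *v z = \<Sigma> *v u" unfolding z_def by (rule matrix_vector_mul_matrix_inv[OF invA])
  define q where "q = u \<bullet> (\<Sigma> *v u)"
  have q: "q = (S *v u) \<bullet> (S *v u)"
    unfolding q_def \<Sigma>v using symmetric_matrix_inner[OF sS] by simp
  have "q\<^sup>2 \<le> (u \<bullet> (A *v u)) * (z \<bullet> (A *v z))"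
    using psd_form_Cauchy_Schwarz[OF sA psd, of u z] by (simp add: Az q_def)
  moreover have "z \<bullet> (A *v z) \<le> C * q"
  proof -
    have "S *v z = B *v (S *v u)"
      unfolding B_def z_def \<Sigma>v by (simp add: matrix_vector_mul_assoc matrix_mul_assoc)
    moreover have "z \<bullet> (A *v z) = (S *v z) \<bullet> (S *v u)"
      using symmetric_matrix_inner[OF sS] by (simp add: Az \<Sigma>v)
    ultimately have "z \<bullet> (A *v z) = (B *v (S *v u)) \<bullet> (S *v u)" by simp
    also have "\<dots> \<le> norm (B *v (S *v u)) * norm (S *v u)" by (rule norm_cauchy_schwarz)
    also have "\<dots> \<le> C * q"
      using mult_right_mono[OF nB[of "S *v u"] norm_ge_zero]
      by (simp add: q dot_square_norm power2_eq_square mult.assoc)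
    finally show ?thesis .
  qed
  ultimately have "q\<^sup>2 \<le> (u \<bullet> (A *v u)) * (C * q)"
    using psd[of u] by (meson mult_left_mono order_trans)
  then have "q * q \<le> (C * (u \<bullet> (A *v u))) * q" by (simp add: power2_eq_square mult_ac)
  then show ?thesis
    using pos_def_form_nonneg[OF pd, of u] C0 psd[of u] unfolding q_def[symmetric]
    by (cases "q = 0") (auto simp: mult_le_cancel_right)
qed

section \<open>Gradients and Hessians of \<open>C\<^sup>2\<close> functions\<close>

lemma grad_eqI:
  assumes "(f has_derivative (\<lambda>v. G \<bullet> v)) (at x)"
  shows "grad f x = G"
proof -
  have "frechet_derivative f (at x) = (\<lambda>v. G \<bullet> v)" using frechet_derivative_at[OF assms] by simp
  then show ?thesis unfolding grad_def by (simp add: vec_eq_iff inner_axis)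
qed

lemma hess_eqI:
  fixes f :: "real^'d \<Rightarrow> real"
  assumes "(grad f has_derivative (\<lambda>v. Hm *v v)) (at x)"
  shows "hess f x = Hm"
proof -
  have "((\<lambda>y. grad f y $ i) has_derivative (\<lambda>v. (Hm *v v) $ i)) (at x)" for i
    using bounded_linear.has_derivative[OF bounded_linear_vec_nth assms] by simp
  then have "frechet_derivative (\<lambda>y. grad f y $ i) (at x) = (\<lambda>v. (Hm *v v) $ i)" for i
    using frechet_derivative_at by metis
  then show ?thesis unfolding hess_def by (simp add: vec_eq_iff matrix_vector_mult_basis column_def)
qed

lemma C2_has_derivative_grad:
  assumes "C2 f"
  shows "(f has_derivative (\<lambda>v. grad f x \<bullet> v)) (at x)"
proof -
  let ?D = "frechet_derivative f (at x)"
  have D: "(f has_derivative ?D) (at x)"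
    using assms unfolding C2_def frechet_derivative_works by blast
  \<comment> \<open>The Riesz representative of the linear functional \<open>?D\<close>.\<close>
  have "?D = (\<lambda>v. adjoint ?D 1 \<bullet> v)"
    using adjoint_works[OF has_derivative_linear[OF D], of _ 1] by (simp add: fun_eq_iff inner_commute)
  with D have "(f has_derivative (\<lambda>v. adjoint ?D 1 \<bullet> v)) (at x)" by simp
  with grad_eqI[OF this] show ?thesis by simp
qed

lemma C2_grad_has_derivative_hess:
  assumes "C2 f"
  shows "(grad f has_derivative (\<lambda>v. hess f x *v v)) (at x)"
proof -
  let ?G = "frechet_derivative (grad f) (at x)"
  have G: "(grad f has_derivative ?G) (at x)"
    using assms unfolding C2_def frechet_derivative_works by blast
  have "?G = (\<lambda>v. matrix ?G *v v)"
    using matrix_vector_mul(2)[OF has_derivative_linear[OF G]] by metis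
  with G have "(grad f has_derivative (\<lambda>v. matrix ?G *v v)) (at x)" by simp
  with hess_eqI[OF this] show ?thesis by simp
qed

lemma C2I:
  fixes f :: "real^'d \<Rightarrow> real"
  assumes "\<And>x. (f has_derivative (\<lambda>v. G x \<bullet> v)) (at x)"
    and "\<And>x. (G has_derivative (\<lambda>v. Hm x *v v)) (at x)"
    and "continuous_on UNIV Hm"
  shows "C2 f"
proof -
  have "grad f = G" using grad_eqI[OF assms(1)] by blast
  moreover from this have "hess f = Hm" using hess_eqI assms(2) by blast
  ultimately show ?thesis using assms unfolding C2_def differentiable_def by auto
qed

lemma bounded_linear_matrix_vector_mul_left: "bounded_linear (\<lambda>M::real^'n^'m. M *v b)"
proof -
  have "linear (\<lambda>M::real^'n^'m. M *v b)"
    by (rule linearI) (simp_all add: matrix_vector_mult_add_rdistrib scaleR_matrix_vector_assoc)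
  then show ?thesis by (simp add: linear_conv_bounded_linear)
qed

lemma C2_sum:
  fixes l :: "'i \<Rightarrow> real^'d \<Rightarrow> real"
  assumes "\<And>i. i \<in> I \<Longrightarrow> C2 (l i)"
  shows "C2 (\<lambda>x. \<Sum>i\<in>I. l i x)"
proof (rule C2I)
  fix x
  show "((\<lambda>x. \<Sum>i\<in>I. l i x) has_derivative (\<lambda>v. (\<Sum>i\<in>I. grad (l i) x) \<bullet> v)) (at x)"
    using has_derivative_sum[OF C2_has_derivative_grad[OF assms]] by (simp add: inner_sum_left)
  show "((\<lambda>x. \<Sum>i\<in>I. grad (l i) x) has_derivative (\<lambda>v. (\<Sum>i\<in>I. hess (l i) x) *v v)) (at x)"
    using has_derivative_sum[OF C2_grad_has_derivative_hess[OF assms]]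
    by (simp add: linear_sum[OF bounded_linear.linear[OF bounded_linear_matrix_vector_mul_left]])
next
  show "continuous_on UNIV (\<lambda>x. \<Sum>i\<in>I. hess (l i) x)"
    using assms unfolding C2_def by (intro continuous_on_sum) auto
qed

lemma C2_line_derivative:
  assumes "C2 f"
  shows "((\<lambda>t. f (x + t *\<^sub>R d)) has_real_derivative (grad f (x + t *\<^sub>R d) \<bullet> d)) (at t)"
proof -
  have "((\<lambda>t. f (x + t *\<^sub>R d)) has_derivative (\<lambda>h. grad f (x + t *\<^sub>R d) \<bullet> (h *\<^sub>R d))) (at t)"
    by (rule has_derivative_compose[OF _ C2_has_derivative_grad[OF assms]])
      (auto intro!: derivative_eq_intros)
  moreover have "(\<lambda>h. grad f (x + t *\<^sub>R d) \<bullet> (h *\<^sub>R d)) = (*) (grad f (x + t *\<^sub>R d) \<bullet> d)"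
    by (simp add: fun_eq_iff mult.commute)
  ultimately show ?thesis by (simp add: has_field_derivative_def)
qed

lemma C2_grad_line_derivative:
  assumes "C2 f"
  shows "((\<lambda>t. grad f (x + t *\<^sub>R d) \<bullet> u) has_real_derivative (u \<bullet> (hess f (x + t *\<^sub>R d) *v d))) (at t)"
proof -
  have "((\<lambda>t. grad f (x + t *\<^sub>R d)) has_derivative (\<lambda>h. hess f (x + t *\<^sub>R d) *v (h *\<^sub>R d))) (at t)"
    by (rule has_derivative_compose[OF _ C2_grad_has_derivative_hess[OF assms]])
      (auto intro!: derivative_eq_intros)
  then have "((\<lambda>t. grad f (x + t *\<^sub>R d) \<bullet> u) has_derivative
      (\<lambda>h. (hess f (x + t *\<^sub>R d) *v (h *\<^sub>R d)) \<bullet> u)) (at t)"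
    using bounded_linear.has_derivative[OF bounded_linear_inner_left] by blast
  moreover have "(\<lambda>h. (hess f (x + t *\<^sub>R d) *v (h *\<^sub>R d)) \<bullet> u) = (*) (u \<bullet> (hess f (x + t *\<^sub>R d) *v d))"
    by (simp add: fun_eq_iff matrix_vector_mult_scaleR inner_commute mult.commute)
  ultimately show ?thesis by (simp add: has_field_derivative_def)
qed

lemma C2_hess_form_continuous:
  assumes "C2 f"
  shows "continuous_on UNIV (\<lambda>y. a \<bullet> (hess f y *v b))"
proof -
  have "continuous_on UNIV (hess f)" using assms unfolding C2_def by blast
  from continuous_on_compose[OF this bounded_linear.continuous_on[OF
        bounded_linear_matrix_vector_mul_left continuous_on_id]]
  have "continuous_on UNIV (\<lambda>y. hess f y *v b)" by (simp add: o_def)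
  then show ?thesis by (intro continuous_intros)
qed

lemma C2_mixed_difference:
  assumes f: "C2 f" and t: "t > 0"
  obtains s r where "0 < s" "s < t" "0 < r" "r < t"
    "f (x + t *\<^sub>R b + t *\<^sub>R a) - f (x + t *\<^sub>R a) - f (x + t *\<^sub>R b) + f x
      = t\<^sup>2 * (a \<bullet> (hess f (x + s *\<^sub>R a + r *\<^sub>R b) *v b))"
proof -
  define g where "g = (\<lambda>s. f ((x + t *\<^sub>R b) + s *\<^sub>R a) - f (x + s *\<^sub>R a))"
  have g': "DERIV g s :> grad f ((x + t *\<^sub>R b) + s *\<^sub>R a) \<bullet> a - grad f (x + s *\<^sub>R a) \<bullet> a" for s
    unfolding g_def by (intro DERIV_diff C2_line_derivative[OF f])
  obtain s where s: "0 < s" "s < t"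
    and gs: "g t - g 0 = (t - 0) * (grad f ((x + t *\<^sub>R b) + s *\<^sub>R a) \<bullet> a - grad f (x + s *\<^sub>R a) \<bullet> a)"
    using MVT2[OF t g'] by blast
  define h where "h = (\<lambda>r. grad f ((x + s *\<^sub>R a) + r *\<^sub>R b) \<bullet> a)"
  have h': "DERIV h r :> a \<bullet> (hess f ((x + s *\<^sub>R a) + r *\<^sub>R b) *v b)" for r
    unfolding h_def by (rule C2_grad_line_derivative[OF f])
  obtain r where r: "0 < r" "r < t"
    and hr: "h t - h 0 = (t - 0) * (a \<bullet> (hess f ((x + s *\<^sub>R a) + r *\<^sub>R b) *v b))"
    using MVT2[OF t h'] by blast
  have "h t - h 0 = grad f ((x + t *\<^sub>R b) + s *\<^sub>R a) \<bullet> a - grad f (x + s *\<^sub>R a) \<bullet> a"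
    unfolding h_def by (simp add: algebra_simps)
  then have "g t - g 0 = t\<^sup>2 * (a \<bullet> (hess f (x + s *\<^sub>R a + r *\<^sub>R b) *v b))"
    using gs hr by (simp add: power2_eq_square)
  then show ?thesis using that s r unfolding g_def by simp
qed

lemma dist_add_scaleR_add_scaleR_le:
  fixes x p q :: "'a::real_normed_vector"
  assumes "0 \<le> s" "s \<le> t" "0 \<le> r" "r \<le> t"
  shows "dist (x + s *\<^sub>R p + r *\<^sub>R q) x \<le> t * (norm p + norm q)"
proof -
  have "dist (x + s *\<^sub>R p + r *\<^sub>R q) x \<le> s * norm p + r * norm q"
    using norm_triangle_ineq[of "s *\<^sub>R p" "r *\<^sub>R q"] assms by (simp add: dist_norm)
  also have "\<dots> \<le> t * norm p + t * norm q"
    using assms by (intro add_mono mult_right_mono) auto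
  finally show ?thesis by (simp add: distrib_left)
qed

text \<open>Schwarz's theorem: the mixed second difference of \<open>f\<close> in the directions \<open>a\<close>, \<open>b\<close> is
  symmetric in \<open>a\<close> and \<open>b\<close>, and divided by \<open>t\<^sup>2\<close> it tends to both \<open>a \<bullet> H b\<close> and \<open>b \<bullet> H a\<close>.\<close>
lemma C2_hess_form_symmetric:
  assumes f: "C2 f"
  shows "a \<bullet> (hess f x *v b) = b \<bullet> (hess f x *v a)"
proof -
  let ?c1 = "\<lambda>y. a \<bullet> (hess f y *v b)" and ?c2 = "\<lambda>y. b \<bullet> (hess f y *v a)"
  have close: "\<bar>?c1 x - ?c2 x\<bar> < 2 * e" if e: "e > 0" for e
  proof -
    obtain d1 where d1: "d1 > 0" "\<And>y. dist y x < d1 \<Longrightarrow> dist (?c1 y) (?c1 x) < e"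
      using C2_hess_form_continuous[OF f, of a b] e unfolding continuous_on_iff by (metis UNIV_I)
    obtain d2 where d2: "d2 > 0" "\<And>y. dist y x < d2 \<Longrightarrow> dist (?c2 y) (?c2 x) < e"
      using C2_hess_form_continuous[OF f, of b a] e unfolding continuous_on_iff by (metis UNIV_I)
    define t where "t = min d1 d2 / (norm a + norm b + 1)"
    have N: "norm a + norm b + 1 > 0" by (simp add: add_nonneg_pos)
    have t: "t > 0" unfolding t_def using d1 d2 N by simp
    have near: "dist (x + s *\<^sub>R p + r *\<^sub>R q) x < min d1 d2"
      if "0 < s" "s < t" "0 < r" "r < t" "norm p + norm q = norm a + norm b" for s r p q
    proof -
      have "dist (x + s *\<^sub>R p + r *\<^sub>R q) x \<le> t * (norm a + norm b)"
        using dist_add_scaleR_add_scaleR_le[of s t r x p q] that by simp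
      also have "\<dots> < t * (norm a + norm b + 1)" using t by simp
      finally show ?thesis unfolding t_def using N by simp
    qed
    obtain s r where sr: "0 < s" "s < t" "0 < r" "r < t" and eq1:
      "f (x + t *\<^sub>R b + t *\<^sub>R a) - f (x + t *\<^sub>R a) - f (x + t *\<^sub>R b) + f x
        = t\<^sup>2 * ?c1 (x + s *\<^sub>R a + r *\<^sub>R b)"
      using C2_mixed_difference[OF f t] by blast
    obtain s' r' where sr': "0 < s'" "s' < t" "0 < r'" "r' < t" and eq2:
      "f (x + t *\<^sub>R a + t *\<^sub>R b) - f (x + t *\<^sub>R b) - f (x + t *\<^sub>R a) + f x
        = t\<^sup>2 * ?c2 (x + s' *\<^sub>R b + r' *\<^sub>R a)"
      using C2_mixed_difference[OF f t] by blast
    have "?c1 (x + s *\<^sub>R a + r *\<^sub>R b) = ?c2 (x + s' *\<^sub>R b + r' *\<^sub>R a)"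
      using eq1 eq2 t by (simp add: algebra_simps)
    moreover have "dist (?c1 (x + s *\<^sub>R a + r *\<^sub>R b)) (?c1 x) < e"
      using d1(2) near[OF sr] by simp
    moreover have "dist (?c2 (x + s' *\<^sub>R b + r' *\<^sub>R a)) (?c2 x) < e"
      using d2(2) near[OF sr', of b a] by simp
    ultimately show ?thesis unfolding dist_real_def by linarith
  qed
  show ?thesis
  proof (rule ccontr)
    assume "?c1 x \<noteq> ?c2 x"
    then show False using close[of "\<bar>?c1 x - ?c2 x\<bar> / 2"] by simp
  qed
qed

lemma C2_hess_symmetric:
  assumes "C2 f"
  shows "transpose (hess f x) = hess f x"
proof (rule symmetric_matrixI)
  fix u v
  show "(hess f x *v u) \<bullet> v = u \<bullet> (hess f x *v v)"
    using C2_hess_form_symmetric[OF assms, of v x u] by (simp only: inner_commute)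
qed

section \<open>Convex functions\<close>

lemma convex_on_line:
  fixes f :: "'a::real_vector \<Rightarrow> real"
  assumes "convex_on UNIV f"
  shows "convex_on UNIV (\<lambda>t. f (x + t *\<^sub>R d))"
proof (rule convex_onI)
  fix t p q :: real
  assume t: "0 < t" "t < 1"
  have "x + ((1 - t) * p + t * q) *\<^sub>R d = (1 - t) *\<^sub>R (x + p *\<^sub>R d) + t *\<^sub>R (x + q *\<^sub>R d)"
    by (simp add: algebra_simps)
  then show "f (x + ((1 - t) *\<^sub>R p + t *\<^sub>R q) *\<^sub>R d) \<le> (1 - t) * f (x + p *\<^sub>R d) + t * f (x + q *\<^sub>R d)"
    using t by (simp add: convex_onD[OF assms])
qed simp

lemma convex_on_above_tangent:
  fixes f :: "'a::real_normed_vector \<Rightarrow> real"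
  assumes cvx: "convex_on UNIV f" and D: "(f has_derivative D) (at x)"
  shows "f y - f x \<ge> D (y - x)"
proof -
  have "((\<lambda>t. x + t *\<^sub>R (y - x)) has_derivative (\<lambda>h. h *\<^sub>R (y - x))) (at 0)"
    by (auto intro!: derivative_eq_intros)
  moreover have "(f has_derivative D) (at (x + 0 *\<^sub>R (y - x)))" using D by simp
  ultimately have "((\<lambda>t. f (x + t *\<^sub>R (y - x))) has_derivative (\<lambda>h. D (h *\<^sub>R (y - x)))) (at 0)"
    by (rule has_derivative_compose)
  moreover have "(\<lambda>h. D (h *\<^sub>R (y - x))) = (*) (D (y - x))"
    using linear_scale[OF has_derivative_linear[OF D]] by (simp add: fun_eq_iff mult.commute)
  ultimately have "((\<lambda>t. f (x + t *\<^sub>R (y - x))) has_real_derivative D (y - x)) (at 0 within UNIV)"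
    by (simp add: has_field_derivative_def)
  from convex_on_imp_above_tangent[OF convex_on_line[OF cvx] _ _ _ this, of 1] show ?thesis by simp
qed

lemma convex_on_C2_grad_monotone:
  assumes "convex_on UNIV f" "C2 f"
  shows "(grad f y - grad f x) \<bullet> (y - x) \<ge> 0"
proof -
  have "f y - f x \<ge> grad f x \<bullet> (y - x)" "f x - f y \<ge> grad f y \<bullet> (x - y)"
    using convex_on_above_tangent[OF assms(1) C2_has_derivative_grad[OF assms(2)]] by auto
  then show ?thesis by (simp add: inner_diff_left inner_diff_right)
qed

lemma convex_on_C2_hess_psd:
  assumes cvx: "convex_on UNIV f" and f: "C2 f"
  shows "v \<bullet> (hess f x *v v) \<ge> 0"
proof (rule ccontr)
  define \<psi> where "\<psi> = (\<lambda>t. grad f (x + t *\<^sub>R v) \<bullet> v)"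
  assume "\<not> ?thesis"
  moreover have "DERIV \<psi> 0 :> v \<bullet> (hess f (x + 0 *\<^sub>R v) *v v)"
    unfolding \<psi>_def by (rule C2_grad_line_derivative[OF f])
  ultimately have "\<exists>d>0. \<forall>h>0. h < d \<longrightarrow> \<psi> h < \<psi> 0"
    using DERIV_neg_dec_right[of \<psi> "v \<bullet> (hess f x *v v)" 0] by simp
  then obtain h where h: "h > 0" "\<psi> h < \<psi> 0" using dense by blast
  have "(grad f (x + h *\<^sub>R v) - grad f x) \<bullet> ((x + h *\<^sub>R v) - x) \<ge> 0"
    by (rule convex_on_C2_grad_monotone[OF cvx f])
  then have "h * (\<psi> h - \<psi> 0) \<ge> 0" unfolding \<psi>_def by (simp add: inner_diff_left)
  with h show False by (simp add: zero_le_mult_iff)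
qed

section \<open>The Newton step\<close>

lemma newton_step_grad_bound:
  fixes f :: "real^'d \<Rightarrow> real" and \<Sigma> :: "real^'d^'d"
  assumes f: "C2 f" and \<Sigma>: "pos_def \<Sigma>"
    and step: "hess f x *v d = grad f x"
    and lip: "\<And>t. t \<in> {0..1} \<Longrightarrow>
      mnorm (matrix_inv \<Sigma>) ((hess f (t *\<^sub>R x + (1 - t) *\<^sub>R (x - d)) - hess f x) *v d) \<le> C"
  shows "\<bar>grad f (x - d) \<bullet> u\<bar> \<le> C * mnorm \<Sigma> u"
proof -
  define \<psi> where "\<psi> = (\<lambda>t. grad f (x - d + t *\<^sub>R d) \<bullet> u)"
  have \<psi>': "DERIV \<psi> t :> u \<bullet> (hess f (x - d + t *\<^sub>R d) *v d)" for t
    unfolding \<psi>_def by (rule C2_grad_line_derivative[OF f])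
  obtain \<xi> where \<xi>: "0 < \<xi>" "\<xi> < 1"
    and mvt: "\<psi> 1 - \<psi> 0 = (1 - 0) * (u \<bullet> (hess f (x - d + \<xi> *\<^sub>R d) *v d))"
    using MVT2[OF zero_less_one \<psi>'] by blast
  define H\<xi> where "H\<xi> = hess f (\<xi> *\<^sub>R x + (1 - \<xi>) *\<^sub>R (x - d))"
  have "x - d + \<xi> *\<^sub>R d = \<xi> *\<^sub>R x + (1 - \<xi>) *\<^sub>R (x - d)" by (simp add: algebra_simps)
  moreover have "(H\<xi> *v d) \<bullet> u = u \<bullet> (H\<xi> *v d)" by (rule inner_commute)
  ultimately have "grad f (x - d) \<bullet> u = - (((H\<xi> - hess f x) *v d) \<bullet> u)"
    using mvt step unfolding \<psi>_def H\<xi>_def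
    by (simp add: matrix_vector_mult_diff_rdistrib inner_diff_left)
  also have "\<bar>\<dots>\<bar> \<le> mnorm (matrix_inv \<Sigma>) ((H\<xi> - hess f x) *v d) * mnorm \<Sigma> u"
    using abs_inner_le_mnorm_dual[OF \<Sigma>] by simp
  also have "\<dots> \<le> C * mnorm \<Sigma> u"
    using lip[of \<xi>] \<xi> pos_def_form_nonneg[OF \<Sigma>, of u] unfolding H\<xi>_def mnorm_def
    by (intro mult_right_mono) auto
  finally show ?thesis .
qed

lemma convex_stationary_point_near:
  fixes f :: "real^'d \<Rightarrow> real" and \<Sigma> :: "real^'d^'d"
  assumes cvx: "convex_on UNIV f" and f: "C2 f" and y: "grad f y = 0" and \<Sigma>: "pos_def \<Sigma>"
    and grad_x: "\<And>u. \<bar>grad f x \<bullet> u\<bar> \<le> a * mnorm \<Sigma> u"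
    and curv: "\<And>z u. mnorm \<Sigma> (z - x) \<le> r \<Longrightarrow> u \<bullet> (\<Sigma> *v u) \<le> C * (u \<bullet> (hess f z *v u))"
    and a: "a \<ge> 0" and C: "C \<ge> 0" and small: "a * C < r"
  shows "mnorm \<Sigma> (y - x) \<le> a * C"
proof (rule ccontr)
  define u where "u = y - x"
  define D where "D = mnorm \<Sigma> u"
  define \<phi> where "\<phi> = (\<lambda>s. grad f (x + s *\<^sub>R u) \<bullet> u)"
  assume "\<not> ?thesis"
  then have far: "D > a * C" unfolding D_def u_def by simp
  then have D: "D > 0" and r: "r > 0" using far small mult_nonneg_nonneg[OF a C] by linarith+
  have uu: "u \<bullet> (\<Sigma> *v u) = D\<^sup>2"
    unfolding D_def mnorm_def using pos_def_form_nonneg[OF \<Sigma>, of u] by simp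
  define s\<^sub>1 where "s\<^sub>1 = min 1 (r / D)"
  have s\<^sub>1: "0 < s\<^sub>1" "s\<^sub>1 \<le> 1" "s\<^sub>1 * D = min D r"
    unfolding s\<^sub>1_def using D r by (auto simp: min_def)
  have \<phi>': "DERIV \<phi> s :> u \<bullet> (hess f (x + s *\<^sub>R u) *v u)" for s
    unfolding \<phi>_def by (rule C2_grad_line_derivative[OF f])
  obtain \<xi> where \<xi>: "0 < \<xi>" "\<xi> < s\<^sub>1"
    and mvt: "\<phi> s\<^sub>1 - \<phi> 0 = (s\<^sub>1 - 0) * (u \<bullet> (hess f (x + \<xi> *\<^sub>R u) *v u))"
    using MVT2[OF s\<^sub>1(1) \<phi>'] by blast
  have "mnorm \<Sigma> ((x + \<xi> *\<^sub>R u) - x) \<le> r"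
    using \<xi> D s\<^sub>1(3) mult_right_mono[of \<xi> s\<^sub>1 D] by (simp add: mnorm_scaleR D_def)
  from curv[OF this, of u] have slope: "D\<^sup>2 \<le> C * (u \<bullet> (hess f (x + \<xi> *\<^sub>R u) *v u))"
    by (simp add: uu)
  have "C * \<phi> 0 \<ge> - (C * (a * D))"
    using grad_x[of u] mult_left_mono[OF _ C, of "- (grad f x \<bullet> u)" "a * D"]
    unfolding \<phi>_def D_def by (simp add: abs_le_iff)
  moreover have "s\<^sub>1 * D\<^sup>2 \<le> C * (s\<^sub>1 * (u \<bullet> (hess f (x + \<xi> *\<^sub>R u) *v u)))"
    using mult_left_mono[OF slope, of s\<^sub>1] s\<^sub>1(1) by (simp add: mult_ac)
  ultimately have "- (C * (a * D)) + s\<^sub>1 * D\<^sup>2 \<le> C * \<phi> s\<^sub>1"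
    using mvt by (simp add: algebra_simps)
  moreover have "0 < D * (s\<^sub>1 * D - a * C)" using D s\<^sub>1(3) far small by (simp add: min_def)
  moreover have "D * (s\<^sub>1 * D - a * C) = - (C * (a * D)) + s\<^sub>1 * D\<^sup>2"
    by (simp add: algebra_simps power2_eq_square)
  ultimately have "0 < C * \<phi> s\<^sub>1" by linarith
  then have pos: "\<phi> s\<^sub>1 > 0" using C by (simp add: zero_less_mult_iff)
  have "(grad f y - grad f (x + s\<^sub>1 *\<^sub>R u)) \<bullet> (y - (x + s\<^sub>1 *\<^sub>R u)) \<ge> 0"
    by (rule convex_on_C2_grad_monotone[OF cvx f])
  moreover have "y - (x + s\<^sub>1 *\<^sub>R u) = (1 - s\<^sub>1) *\<^sub>R u" unfolding u_def by (simp add: algebra_simps)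
  ultimately have "(1 - s\<^sub>1) * \<phi> s\<^sub>1 \<le> 0" using y unfolding \<phi>_def by simp
  moreover have "\<phi> 1 = 0" unfolding \<phi>_def u_def using y by simp
  ultimately show False using pos s\<^sub>1(2) by (cases "s\<^sub>1 = 1") (simp_all add: mult_le_0_iff)
qed

theorem mainTheorem1:
  fixes l :: "nat \<Rightarrow> real^'d \<Rightarrow> real"
    and n :: nat and T :: "nat set"
    and \<theta>hat \<theta>T :: "real^'d"
    and \<Sigma> :: "real^'d^'d"
    and r C_op C_h :: real
  defines "L \<equiv> (\<lambda>\<theta>. \<Sum>i\<in>{1..n} - T. l i \<theta>)"
  defines "H \<equiv> hess L \<theta>hat"
  defines "\<theta>NS \<equiv> \<theta>hat - matrix_inv H *v grad L \<theta>hat"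
  assumes C2: "\<And>i. i \<in> {1..n} \<Longrightarrow> C2 (l i)"
    and T: "T \<subseteq> {1..n}"
    and convex: "convex_on UNIV L"
    and stat: "(\<Sum>i=1..n. grad (l i) \<theta>hat) = 0"
    and statT: "grad L \<theta>T = 0"
    and Hinv: "invertible H"
    and Sigma: "pos_def \<Sigma>"
    and r: "r > 0"
    and sc: "\<And>\<theta>. mnorm \<Sigma> (\<theta> - \<theta>NS) \<le> r \<Longrightarrow>
               invertible (hess L \<theta>) \<and>
               opnorm (msqrt \<Sigma> ** matrix_inv (hess L \<theta>) ** msqrt \<Sigma>) \<le> C_op"
    and lip: "\<And>t. t \<in> {0..1} \<Longrightarrow>
               mnorm (matrix_inv \<Sigma>)
                 ((hess L (t *\<^sub>R \<theta>hat + (1 - t) *\<^sub>R \<theta>NS) - H) *v (matrix_inv H *v grad L \<theta>hat))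
               \<le> C_h"
    and small: "C_h * C_op < r"
  shows "mnorm \<Sigma> (\<theta>T - \<theta>NS) \<le> C_h * C_op"
proof -
  have L: "C2 L" unfolding L_def by (rule C2_sum) (use C2 in auto)
  have "mnorm \<Sigma> (\<theta>NS - \<theta>NS) \<le> r" using r by (simp add: mnorm_def)
  then have C_op: "C_op \<ge> 0" using sc opnorm_nonneg order_trans by blast
  have C_h: "C_h \<ge> 0"
    using order_trans[OF _ lip[of 0]] pos_def_matrix_inv_form_nonneg[OF Sigma] by (simp add: mnorm_def)
  have "H *v (matrix_inv H *v grad L \<theta>hat) = grad L \<theta>hat"
    by (rule matrix_vector_mul_matrix_inv[OF Hinv])
  from newton_step_grad_bound[OF L Sigma this[unfolded H_def] lip[unfolded \<theta>NS_def H_def]]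
  have grad: "\<bar>grad L \<theta>NS \<bullet> u\<bar> \<le> C_h * mnorm \<Sigma> u" for u
    unfolding \<theta>NS_def H_def .
  have curv: "u \<bullet> (\<Sigma> *v u) \<le> C_op * (u \<bullet> (hess L \<theta> *v u))"
    if "mnorm \<Sigma> (\<theta> - \<theta>NS) \<le> r" for \<theta> u
    using sc[OF that] by (intro quadratic_form_le_of_opnorm_inverse[OF Sigma
        C2_hess_symmetric[OF L] convex_on_C2_hess_psd[OF convex L]]) auto
  show ?thesis
    by (rule convex_stationary_point_near[OF convex L statT Sigma grad curv C_h C_op small])
qed

end
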